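(* The Cut Rule \[ \frac{\Gamma_1\Rightarrow \phi \qquad \Gamma_2,\phi \Rightarrow \Delta}{\Gamma_1,\Gamma_2 \Rightarrow \Delta} \] is admissible in the sequent calculus $\mathsf{G3iLL}$; that is, for all finite multisets of formulas $\Gamma_1,\Gamma_2$, every formula $\phi$ and every multiset $\Delta$ containing at most one formula, if $\Gamma_1\Rightarrow\phi$ and $\Gamma_2,\phi\Rightarrow\Delta$ are derivable in $\mathsf{G3iLL}$, then $\Gamma_1,\Gamma_2\Rightarrow\Delta$ is derivable in $\mathsf{G3iLL}$.
   Context: Formulas of the language of propositional Lax Logic are built from the constant $\bot$ and propositional atoms $p,q,\dots$ (with $\bot$ not an atom) using the binary connectives $\wedge,\vee,\to$ and a unary modal operator $\bigcirc$. A sequent is an expression $\Gamma\Rightarrow\Delta$ with $\Gamma,\Delta$ finite multisets of formulas and $\Delta$ containing at most one formula; $\Gamma,\Pi$ denotes multiset union. The calculus $\mathsf{G3iLL}$ has the axioms $\Gamma,p\Rightarrow p$ ($p$ an atom) and $\Gamma,\bot\Rightarrow\Delta$, and the rules (premisses / conclusion): $R\wedge$: $\Gamma\Rightarrow\phi$ and $\Gamma\Rightarrow\psi$ / $\Gamma\Rightarrow\phi\wedge\psi$; $L\wedge$: $\Gamma,\phi,\psi\Rightarrow\Delta$ / $\Gamma,\phi\wedge\psi\Rightarrow\Delta$; $R\vee$: $\Gamma\Rightarrow\phi_i$ / $\Gamma\Rightarrow\phi_0\vee\phi_1$ ($i=0,1$); $L\vee$: $\Gamma,\phi\Rightarrow\Delta$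 and $\Gamma,\psi\Rightarrow\Delta$ / $\Gamma,\phi\vee\psi\Rightarrow\Delta$; $R\to$: $\Gamma,\phi\Rightarrow\psi$ / $\Gamma\Rightarrow\phi\to\psi$; $L\to$: $\Gamma,\phi\to\psi\Rightarrow\phi$ and $\Gamma,\psi\Rightarrow\Delta$ / $\Gamma,\phi\to\psi\Rightarrow\Delta$; $R\bigcirc$: $\Gamma\Rightarrow\phi$ / $\Gamma\Rightarrow\bigcirc\phi$; $L\bigcirc$: $\Gamma,\psi\Rightarrow\bigcirc\phi$ / $\Gamma,\bigcirc\psi\Rightarrow\bigcirc\phi$. *)

theory Defs
  imports Main "HOL-Library.Multiset"
begin

datatype 'a fm =
    Bot
  | Atom 'a
  | Conj "'a fm" "'a fm"
  | Disj "'a fm" "'a fm"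
  | Imp "'a fm" "'a fm"
  | Circ "'a fm"

text \<open>A sequent Gamma => Delta: Gamma a finite multiset, Delta a multiset with at most one
formula, represented as an option (None = empty succedent).\<close>
inductive G3iLL :: "'a fm multiset \<Rightarrow> 'a fm option \<Rightarrow> bool" where
  Ax:   "G3iLL (add_mset (Atom p) \<Gamma>) (Some (Atom p))"
| LBot: "G3iLL (add_mset Bot \<Gamma>) \<Delta>"
| RConj: "G3iLL \<Gamma> (Some \<phi>) \<Longrightarrow> G3iLL \<Gamma> (Some \<psi>) \<Longrightarrow> G3iLL \<Gamma> (Some (Conj \<phi> \<psi>))"
| LConj: "G3iLL (add_mset \<phi> (add_mset \<psi> \<Gamma>)) \<Delta> \<Longrightarrow> G3iLL (add_mset (Conj \<phi> \<psi>) \<Gamma>) \<Delta>"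
| RDisj0: "G3iLL \<Gamma> (Some \<phi>) \<Longrightarrow> G3iLL \<Gamma> (Some (Disj \<phi> \<psi>))"
| RDisj1: "G3iLL \<Gamma> (Some \<psi>) \<Longrightarrow> G3iLL \<Gamma> (Some (Disj \<phi> \<psi>))"
| LDisj: "G3iLL (add_mset \<phi> \<Gamma>) \<Delta> \<Longrightarrow> G3iLL (add_mset \<psi> \<Gamma>) \<Delta> \<Longrightarrow>
          G3iLL (add_mset (Disj \<phi> \<psi>) \<Gamma>) \<Delta>"
| RImp: "G3iLL (add_mset \<phi> \<Gamma>) (Some \<psi>) \<Longrightarrow> G3iLL \<Gamma> (Some (Imp \<phi> \<psi>))"
| LImp: "G3iLL (add_mset (Imp \<phi> \<psi>) \<Gamma>) (Some \<phi>) \<Longrightarrow> G3iLL (add_mset \<psi> \<Gamma>) \<Delta> \<Longrightarrow>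
          G3iLL (add_mset (Imp \<phi> \<psi>) \<Gamma>) \<Delta>"
| RCirc: "G3iLL \<Gamma> (Some \<phi>) \<Longrightarrow> G3iLL \<Gamma> (Some (Circ \<phi>))"
| LCirc: "G3iLL (add_mset \<psi> \<Gamma>) (Some (Circ \<phi>)) \<Longrightarrow> G3iLL (add_mset (Circ \<psi>) \<Gamma>) (Some (Circ \<phi>))"

end

theory Submission
  imports Defs
begin

(* Cut is admissible by induction on the cut formula phi. Say that Gamma1 acts as phi if it
   can replace phi as principal formula of phi's left rule. Replacing a formula by a multiset
   that acts as it is admissible in any derivation, by induction on that derivation, so it
   suffices that a derivation of Gamma1 => phi makes Gamma1 act as phi. This goes by induction
   on that derivation: a final left rule is permuted past, and a final right rule reduces the
   claim to cuts on the immediate subformulas of phi followed by contractions. Letting the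
   components of a compound formula act as it, the same replacement lemma gives invertibility
   of the left rules (of L-> in its right premise), and from that contraction is admissible. *)

lemma G3iLL_Ax_mem: "Atom p \<in># \<Gamma> \<Longrightarrow> G3iLL \<Gamma> (Some (Atom p))"
  by (metis G3iLL.Ax insert_DiffM)

lemma G3iLL_LBot_mem: "Bot \<in># \<Gamma> \<Longrightarrow> G3iLL \<Gamma> \<Delta>"
  by (metis G3iLL.LBot insert_DiffM)

lemma G3iLL_weakening: "G3iLL \<Gamma> \<Delta> \<Longrightarrow> G3iLL (\<Gamma> + \<Sigma>) \<Delta>"
  by (induction rule: G3iLL.induct) (auto intro: G3iLL.intros)

text \<open>In the \<open>L\<rightarrow>\<close> clause the left premise is taken with \<open>X\<close> already replaced by
  \<open>M\<close>, which is the form in which the induction over the derivation supplies it.\<close>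

fun acts_as_principal :: "'a fm multiset \<Rightarrow> 'a fm \<Rightarrow> bool" where
  "acts_as_principal M Bot \<longleftrightarrow> (\<forall>\<Gamma> \<Delta>. G3iLL (M + \<Gamma>) \<Delta>)"
| "acts_as_principal M (Atom p) \<longleftrightarrow> (\<forall>\<Gamma>. G3iLL (M + \<Gamma>) (Some (Atom p)))"
| "acts_as_principal M (Conj A B) \<longleftrightarrow>
    (\<forall>\<Gamma> \<Delta>. G3iLL (add_mset A (add_mset B \<Gamma>)) \<Delta> \<longrightarrow> G3iLL (M + \<Gamma>) \<Delta>)"
| "acts_as_principal M (Disj A B) \<longleftrightarrow>
    (\<forall>\<Gamma> \<Delta>. G3iLL (add_mset A \<Gamma>) \<Delta> \<longrightarrow> G3iLL (add_mset B \<Gamma>) \<Delta> \<longrightarrow> G3iLL (M + \<Gamma>) \<Delta>)"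
| "acts_as_principal M (Imp A B) \<longleftrightarrow>
    (\<forall>\<Gamma> \<Delta>. G3iLL (M + \<Gamma>) (Some A) \<longrightarrow> G3iLL (add_mset B \<Gamma>) \<Delta> \<longrightarrow> G3iLL (M + \<Gamma>) \<Delta>)"
| "acts_as_principal M (Circ A) \<longleftrightarrow>
    (\<forall>\<Gamma> \<chi>. G3iLL (add_mset A \<Gamma>) (Some (Circ \<chi>)) \<longrightarrow> G3iLL (M + \<Gamma>) (Some (Circ \<chi>)))"

lemma G3iLL_replace_principal:
  assumes "acts_as_principal M X"
  shows "G3iLL \<Gamma> \<Delta> \<Longrightarrow> X \<in># \<Gamma> \<Longrightarrow> G3iLL (M + (\<Gamma> - {#X#})) \<Delta>"
  by (induction rule: G3iLL.induct)
    (use assms in \<open>auto intro: G3iLL.intros G3iLL_Ax_mem G3iLL_LBot_mem\<close>)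

lemma G3iLL_LConj_inv:
  "G3iLL (add_mset (Conj A B) \<Gamma>) \<Delta> \<Longrightarrow> G3iLL (add_mset A (add_mset B \<Gamma>)) \<Delta>"
  using G3iLL_replace_principal[of "{#A, B#}" "Conj A B"] by fastforce

lemma G3iLL_LDisj_inv1: "G3iLL (add_mset (Disj A B) \<Gamma>) \<Delta> \<Longrightarrow> G3iLL (add_mset A \<Gamma>) \<Delta>"
  using G3iLL_replace_principal[of "{#A#}" "Disj A B"] by fastforce

lemma G3iLL_LDisj_inv2: "G3iLL (add_mset (Disj A B) \<Gamma>) \<Delta> \<Longrightarrow> G3iLL (add_mset B \<Gamma>) \<Delta>"
  using G3iLL_replace_principal[of "{#B#}" "Disj A B"] by fastforce

lemma G3iLL_LImp_inv: "G3iLL (add_mset (Imp A B) \<Gamma>) \<Delta> \<Longrightarrow> G3iLL (add_mset B \<Gamma>) \<Delta>"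
  using G3iLL_replace_principal[of "{#B#}" "Imp A B"] by fastforce

lemma G3iLL_LCirc_inv: "G3iLL (add_mset (Circ A) \<Gamma>) \<Delta> \<Longrightarrow> G3iLL (add_mset A \<Gamma>) \<Delta>"
  using G3iLL_replace_principal[of "{#A#}" "Circ A"] by fastforce

definition contractible :: "'a fm \<Rightarrow> bool" where
  "contractible A \<longleftrightarrow>
    (\<forall>\<Gamma> \<Delta>. G3iLL (add_mset A (add_mset A \<Gamma>)) \<Delta> \<longrightarrow> G3iLL (add_mset A \<Gamma>) \<Delta>)"

lemma G3iLL_contract_if_contractible:
  "\<forall>B\<in>#\<Sigma>. contractible B \<Longrightarrow> G3iLL (\<Sigma> + \<Sigma> + \<Gamma>) \<Delta> \<Longrightarrow> G3iLL (\<Sigma> + \<Gamma>) \<Delta>"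
proof (induction \<Sigma> arbitrary: \<Gamma>)
  case (add B \<Sigma>)
  have "G3iLL (add_mset B (add_mset B (\<Sigma> + \<Sigma> + \<Gamma>))) \<Delta>"
    using add.prems(2) by simp
  then have "G3iLL (\<Sigma> + \<Sigma> + add_mset B \<Gamma>) \<Delta>"
    using add.prems(1) by (simp add: contractible_def)
  then have "G3iLL (\<Sigma> + add_mset B \<Gamma>) \<Delta>"
    using add.IH[of "add_mset B \<Gamma>"] add.prems(1) by simp
  then show ?case
    by simp
qed simp

text \<open>A left rule whose principal formula is kept in the premises is admissible as soon as
  the components are contractible: invert the retained copy, then contract.\<close>

lemma G3iLL_LConj_absorb:
  assumes "contractible C" "contractible D" "Conj C D \<in># \<Gamma>"
    and "G3iLL (add_mset C (add_mset D \<Gamma>)) \<Delta>"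
  shows "G3iLL \<Gamma> \<Delta>"
proof -
  obtain R where R: "\<Gamma> = add_mset (Conj C D) R"
    using assms(3) by (blast dest: multi_member_split)
  have "G3iLL (add_mset (Conj C D) (add_mset C (add_mset D R))) \<Delta>"
    using assms(4) R by (simp add: add_mset_commute)
  then have "G3iLL (add_mset C (add_mset D (add_mset C (add_mset D R)))) \<Delta>"
    by (rule G3iLL_LConj_inv)
  then have "G3iLL ({#C, D#} + {#C, D#} + R) \<Delta>"
    by (simp add: add_mset_commute)
  then have "G3iLL ({#C, D#} + R) \<Delta>"
    by (rule G3iLL_contract_if_contractible[rotated]) (simp add: assms)
  then show ?thesis
    using R by (simp add: G3iLL.LConj)
qed

lemma G3iLL_LDisj_absorb:
  assumes "contractible C" "contractible D" "Disj C D \<in># \<Gamma>"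
    and "G3iLL (add_mset C \<Gamma>) \<Delta>" "G3iLL (add_mset D \<Gamma>) \<Delta>"
  shows "G3iLL \<Gamma> \<Delta>"
proof -
  obtain R where R: "\<Gamma> = add_mset (Disj C D) R"
    using assms(3) by (blast dest: multi_member_split)
  have "G3iLL (add_mset (Disj C D) (add_mset C R)) \<Delta>"
    using assms(4) R by (simp add: add_mset_commute)
  then have "G3iLL (add_mset C (add_mset C R)) \<Delta>"
    by (rule G3iLL_LDisj_inv1)
  moreover have "G3iLL (add_mset (Disj C D) (add_mset D R)) \<Delta>"
    using assms(5) R by (simp add: add_mset_commute)
  then have "G3iLL (add_mset D (add_mset D R)) \<Delta>"
    by (rule G3iLL_LDisj_inv2)
  ultimately show ?thesis
    using assms(1,2) R by (simp add: contractible_def G3iLL.LDisj)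
qed

lemma G3iLL_LImp_absorb:
  assumes "contractible D" "Imp C D \<in># \<Gamma>"
    and "G3iLL \<Gamma> (Some C)" "G3iLL (add_mset D \<Gamma>) \<Delta>"
  shows "G3iLL \<Gamma> \<Delta>"
proof -
  obtain R where R: "\<Gamma> = add_mset (Imp C D) R"
    using assms(2) by (blast dest: multi_member_split)
  have "G3iLL (add_mset (Imp C D) (add_mset D R)) \<Delta>"
    using assms(4) R by (simp add: add_mset_commute)
  then have "G3iLL (add_mset D (add_mset D R)) \<Delta>"
    by (rule G3iLL_LImp_inv)
  then show ?thesis
    using assms(1,3) R by (simp add: contractible_def G3iLL.LImp)
qed

lemma G3iLL_LCirc_absorb:
  assumes "contractible C" "Circ C \<in># \<Gamma>"
    and "G3iLL (add_mset C \<Gamma>) (Some (Circ \<chi>))"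
  shows "G3iLL \<Gamma> (Some (Circ \<chi>))"
proof -
  obtain R where R: "\<Gamma> = add_mset (Circ C) R"
    using assms(2) by (blast dest: multi_member_split)
  have "G3iLL (add_mset (Circ C) (add_mset C R)) (Some (Circ \<chi>))"
    using assms(3) R by (simp add: add_mset_commute)
  then have "G3iLL (add_mset C (add_mset C R)) (Some (Circ \<chi>))"
    by (rule G3iLL_LCirc_inv)
  then show ?thesis
    using assms(1) R by (simp add: contractible_def G3iLL.LCirc)
qed

lemma mem_if_count_ge_2: "2 \<le> count M x \<Longrightarrow> x \<in># M"
  by (simp add: count_greater_zero_iff[symmetric] del: count_greater_zero_iff)

lemma G3iLL_remove_duplicate:
  fixes A :: "'a fm"
  assumes smaller: "\<And>B :: 'a fm. size B < size A \<Longrightarrow> contractible B"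
  shows "G3iLL \<Gamma> \<Delta> \<Longrightarrow> 2 \<le> count \<Gamma> A \<Longrightarrow> G3iLL (\<Gamma> - {#A#}) \<Delta>"
proof (induction rule: G3iLL.induct)
  case (LConj C D \<Gamma> \<Delta>)
  show ?case
  proof (cases "A = Conj C D")
    case True
    have "G3iLL \<Gamma> \<Delta>"
      by (rule G3iLL_LConj_absorb[OF _ _ _ LConj.hyps])
        (use LConj True in \<open>auto simp: not_in_iff[symmetric] intro: smaller\<close>)
    with True show ?thesis
      by simp
  qed (use LConj mem_if_count_ge_2[of _ A] in \<open>auto intro: G3iLL.LConj\<close>)
next
  case (LDisj C \<Gamma> \<Delta> D)
  show ?case
  proof (cases "A = Disj C D")
    case True
    have "G3iLL \<Gamma> \<Delta>"
      by (rule G3iLL_LDisj_absorb[OF _ _ _ LDisj.hyps])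
        (use LDisj True in \<open>auto simp: not_in_iff[symmetric] intro: smaller\<close>)
    with True show ?thesis
      by simp
  qed (use LDisj mem_if_count_ge_2[of _ A] in \<open>auto intro: G3iLL.LDisj\<close>)
next
  case (LImp C D \<Gamma> \<Delta>)
  show ?case
  proof (cases "A = Imp C D")
    case True
    have "G3iLL \<Gamma> \<Delta>"
      by (rule G3iLL_LImp_absorb[OF _ _ _ LImp.hyps(2)])
        (use LImp True in \<open>auto simp: not_in_iff[symmetric] intro: smaller\<close>)
    with True show ?thesis
      by simp
  qed (use LImp mem_if_count_ge_2[of _ A] in \<open>auto intro: G3iLL.LImp\<close>)
next
  case (LCirc C \<Gamma> \<chi>)
  show ?case
  proof (cases "A = Circ C")
    case True
    have "G3iLL \<Gamma> (Some (Circ \<chi>))"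
      by (rule G3iLL_LCirc_absorb[OF _ _ LCirc.hyps])
        (use LCirc True in \<open>auto simp: not_in_iff[symmetric] intro: smaller\<close>)
    with True show ?thesis
      by simp
  qed (use LCirc mem_if_count_ge_2[of _ A] in \<open>auto intro: G3iLL.LCirc\<close>)
qed (use mem_if_count_ge_2[of _ A] in \<open>auto simp: in_diff_count split: if_splits
    intro: G3iLL.intros G3iLL_Ax_mem G3iLL_LBot_mem\<close>)

lemma all_contractible: "contractible A"
proof (induction A rule: measure_induct_rule[of size])
  case (less A)
  show ?case
    unfolding contractible_def
  proof (intro allI impI)
    fix \<Gamma> \<Delta>
    assume "G3iLL (add_mset A (add_mset A \<Gamma>)) \<Delta>"
    then show "G3iLL (add_mset A \<Gamma>) \<Delta>"
      using G3iLL_remove_duplicate[OF less.IH] by fastforce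
  qed
qed

lemma G3iLL_contraction: "G3iLL (\<Sigma> + \<Sigma> + \<Gamma>) \<Delta> \<Longrightarrow> G3iLL (\<Sigma> + \<Gamma>) \<Delta>"
  by (rule G3iLL_contract_if_contractible) (simp_all add: all_contractible)

definition cut_admissible :: "'a fm \<Rightarrow> bool" where
  "cut_admissible \<phi> \<longleftrightarrow>
    (\<forall>\<Gamma>1 \<Gamma>2 \<Delta>. G3iLL \<Gamma>1 (Some \<phi>) \<longrightarrow> G3iLL (add_mset \<phi> \<Gamma>2) \<Delta> \<longrightarrow> G3iLL (\<Gamma>1 + \<Gamma>2) \<Delta>)"

lemma cut_admissibleD:
  "cut_admissible \<phi> \<Longrightarrow> G3iLL \<Gamma>1 (Some \<phi>) \<Longrightarrow> G3iLL (add_mset \<phi> \<Gamma>2) \<Delta> \<Longrightarrow>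
    G3iLL (\<Gamma>1 + \<Gamma>2) \<Delta>"
  unfolding cut_admissible_def by blast

lemma cut_admissible_if_acts_as_principal:
  assumes "\<And>\<Gamma>1. G3iLL \<Gamma>1 (Some \<phi>) \<Longrightarrow> acts_as_principal \<Gamma>1 \<phi>"
  shows "cut_admissible \<phi>"
  unfolding cut_admissible_def
  using G3iLL_replace_principal[OF assms, of _ "add_mset \<phi> _"] by simp

lemma acts_as_principal_Conj:
  assumes "cut_admissible C" "cut_admissible D" "G3iLL \<Gamma>1 (Some C)" "G3iLL \<Gamma>1 (Some D)"
  shows "acts_as_principal \<Gamma>1 (Conj C D)"
proof (simp, intro allI impI)
  fix \<Gamma> \<Delta>
  assume "G3iLL (add_mset C (add_mset D \<Gamma>)) \<Delta>"
  then have "G3iLL (add_mset D (\<Gamma>1 + \<Gamma>)) \<Delta>"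
    using cut_admissibleD[OF assms(1,3)] by fastforce
  then have "G3iLL (\<Gamma>1 + \<Gamma>1 + \<Gamma>) \<Delta>"
    using cut_admissibleD[OF assms(2,4)] by (simp add: add.assoc)
  then show "G3iLL (\<Gamma>1 + \<Gamma>) \<Delta>"
    by (rule G3iLL_contraction)
qed

lemma acts_as_principal_Disj0:
  "cut_admissible C \<Longrightarrow> G3iLL \<Gamma>1 (Some C) \<Longrightarrow> acts_as_principal \<Gamma>1 (Disj C D)"
  by (auto intro: cut_admissibleD)

lemma acts_as_principal_Disj1:
  "cut_admissible D \<Longrightarrow> G3iLL \<Gamma>1 (Some D) \<Longrightarrow> acts_as_principal \<Gamma>1 (Disj C D)"
  by (auto intro: cut_admissibleD)

lemma acts_as_principal_Imp:
  assumes "cut_admissible C" "cut_admissible D" "G3iLL (add_mset C \<Gamma>1) (Some D)"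
  shows "acts_as_principal \<Gamma>1 (Imp C D)"
proof (simp, intro allI impI)
  fix \<Gamma> \<Delta>
  assume "G3iLL (\<Gamma>1 + \<Gamma>) (Some C)" "G3iLL (add_mset D \<Gamma>) \<Delta>"
  then have "G3iLL ((\<Gamma>1 + \<Gamma>) + \<Gamma>1 + \<Gamma>) \<Delta>"
    using assms by (blast intro: cut_admissibleD)
  then have "G3iLL ((\<Gamma>1 + \<Gamma>) + (\<Gamma>1 + \<Gamma>) + {#}) \<Delta>"
    by (simp add: ac_simps)
  then show "G3iLL (\<Gamma>1 + \<Gamma>) \<Delta>"
    using G3iLL_contraction by fastforce
qed

lemma acts_as_principal_Circ:
  "cut_admissible C \<Longrightarrow> G3iLL \<Gamma>1 (Some C) \<Longrightarrow> acts_as_principal \<Gamma>1 (Circ C)"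
  by (auto intro: cut_admissibleD)

lemma acts_as_principal_LConj:
  "acts_as_principal (add_mset A (add_mset B \<Gamma>1)) \<phi> \<Longrightarrow>
    acts_as_principal (add_mset (Conj A B) \<Gamma>1) \<phi>"
  by (cases \<phi>) (auto intro: G3iLL.LConj dest: G3iLL_LConj_inv)

lemma acts_as_principal_LDisj:
  assumes "acts_as_principal (add_mset A \<Gamma>1) \<phi>" "acts_as_principal (add_mset B \<Gamma>1) \<phi>"
  shows "acts_as_principal (add_mset (Disj A B) \<Gamma>1) \<phi>"
proof (cases \<phi>)
  case (Imp C D)
  show ?thesis
    unfolding Imp
  proof (simp, intro allI impI)
    fix \<Gamma> \<Delta>
    assume C: "G3iLL (add_mset (Disj A B) (\<Gamma>1 + \<Gamma>)) (Some C)"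
      and D: "G3iLL (add_mset D \<Gamma>) \<Delta>"
    have "G3iLL (add_mset A (\<Gamma>1 + \<Gamma>)) (Some C)" "G3iLL (add_mset B (\<Gamma>1 + \<Gamma>)) (Some C)"
      using G3iLL_LDisj_inv1[OF C] G3iLL_LDisj_inv2[OF C] by simp_all
    with D assms show "G3iLL (add_mset (Disj A B) (\<Gamma>1 + \<Gamma>)) \<Delta>"
      unfolding Imp by (simp add: G3iLL.LDisj)
  qed
qed (use assms in \<open>auto intro: G3iLL.LDisj\<close>)

lemma acts_as_principal_LImp:
  assumes "G3iLL (add_mset (Imp A B) \<Gamma>1) (Some A)" "acts_as_principal (add_mset B \<Gamma>1) \<phi>"
  shows "acts_as_principal (add_mset (Imp A B) \<Gamma>1) \<phi>"
proof -
  have "G3iLL (add_mset (Imp A B) (\<Gamma>1 + \<Gamma>)) (Some A)" for \<Gamma>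
    using G3iLL_weakening[OF assms(1), of \<Gamma>] by simp
  then show ?thesis
    using assms(2) by (cases \<phi>) (auto intro: G3iLL.LImp dest: G3iLL_LImp_inv)
qed

lemma acts_as_principal_LCirc:
  "acts_as_principal (add_mset A \<Gamma>1) (Circ \<chi>) \<Longrightarrow>
    acts_as_principal (add_mset (Circ A) \<Gamma>1) (Circ \<chi>)"
  by (auto intro: G3iLL.LCirc)

lemma acts_as_principal_if_derivable:
  fixes \<phi> :: "'a fm"
  assumes smaller: "\<And>\<psi> :: 'a fm. size \<psi> < size \<phi> \<Longrightarrow> cut_admissible \<psi>"
  shows "G3iLL \<Gamma>1 (Some \<phi>) \<Longrightarrow> acts_as_principal \<Gamma>1 \<phi>"
proof (induction \<Gamma>1 "Some \<phi>" rule: G3iLL.induct)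
  case (LBot \<Gamma>)
  then show ?case
    by (cases \<phi>) (auto intro: G3iLL_LBot_mem)
next
  case (LCirc A \<Gamma>1 \<chi>)
  then show ?case
    using acts_as_principal_LCirc by blast
qed (use smaller in \<open>auto intro: G3iLL.Ax acts_as_principal_Conj acts_as_principal_Disj0
    acts_as_principal_Disj1 acts_as_principal_Imp acts_as_principal_Circ
    acts_as_principal_LConj acts_as_principal_LDisj acts_as_principal_LImp\<close>)

lemma all_cut_admissible: "cut_admissible \<phi>"
proof (induction \<phi> rule: measure_induct_rule[of size])
  case (less \<phi>)
  show ?case
    using acts_as_principal_if_derivable[OF less.IH] by (rule cut_admissible_if_acts_as_principal)
qed

theorem mainTheorem1:
  fixes \<Gamma>1 \<Gamma>2 :: "'a fm multiset" and \<phi> :: "'a fm" and \<Delta> :: "'a fm option"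
  assumes "G3iLL \<Gamma>1 (Some \<phi>)"
      and "G3iLL (add_mset \<phi> \<Gamma>2) \<Delta>"
  shows "G3iLL (\<Gamma>1 + \<Gamma>2) \<Delta>"
  using all_cut_admissible assms by (rule cut_admissibleD)

end
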